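(* Let $K_2^p=\{x\in\mathbf{R}^p : \|(x_1,\dots,x_{p-1})\|_2\le x_p\}$ be the second-order cone and $\mathbf{R}_+^p$ the non-negative orthant. For every $x\in\mathbf{R}^p$, $$P_{K_2^p\cap\mathbf{R}_+^p}(x)=P_{K_2^p}\left(P_{\mathbf{R}_+^{p-1}\times\mathbf{R}}(x)\right).$$
   Context: For a closed convex set $C\subset\mathbf{R}^p$, $P_C(x)$ denotes the Euclidean projection of $x$ onto $C$, i.e. the unique point of $C$ closest to $x$ in $\|\cdot\|_2$. $\mathbf{R}_+^{p-1}\times\mathbf{R}$ is the set of $x\in\mathbf{R}^p$ with $x_1,\dots,x_{p-1}\ge 0$. *)

theory Defs
  imports "HOL-Analysis.Analysis"
begin

text \<open>Vectors in R^p are modelled as real^'n with CARD('n) = p; the coordinate j plays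
the role of the last coordinate x_p, the others are x_1..x_{p-1}.\<close>

definition soc :: "'n::finite \<Rightarrow> (real^'n) set" where
  "soc j = {x. sqrt (\<Sum>i\<in>UNIV - {j}. (x $ i)^2) \<le> x $ j}"

definition nonneg_orthant :: "(real^'n::finite) set" where
  "nonneg_orthant = {x. \<forall>i. 0 \<le> x $ i}"

definition nonneg_except :: "'n::finite \<Rightarrow> (real^'n) set" where
  "nonneg_except j = {x. \<forall>i. i \<noteq> j \<longrightarrow> 0 \<le> x $ i}"

abbreviation proj :: "(real^'n::finite) set \<Rightarrow> real^'n \<Rightarrow> real^'n" where
  "proj C x \<equiv> closest_point C x"

end

theory Submission
  imports Defs
begin

text \<open>Let y be x with its negative coordinates off the axis j replaced by 0 (the projection
onto \<open>nonneg_except j\<close>) and z the projection of y onto the cone. The cone is invariant under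
changing the sign of a coordinate k \<noteq> j, which changes the squared distance to y by 4 y_k z_k;
by uniqueness of the projection, y_k z_k \<le> 0 forces z_k = 0. Hence z \<ge> 0, and z_k = 0
wherever x_k < 0. Since x - y is supported where x_k < 0, this gives \<langle>x - y, w - z\<rangle> \<le> 0 for every w in the intersection;
adding the variational inequality \<langle>y - z, w - z\<rangle> \<le> 0 of z shows that z is also the
projection of x onto the intersection.\<close>

lemma closest_point_eqI:
  fixes S :: "'a::{real_inner,heine_borel} set"
  assumes "convex S" "closed S" "y \<in> S" and obtuse: "\<And>w. w \<in> S \<Longrightarrow> inner (x - y) (w - y) \<le> 0"
  shows "closest_point S x = y"
proof -
  have "dist x y \<le> dist x w" if w: "w \<in> S" for w
  proof -
    have "x - w = (x - y) - (w - y)" by simp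
    then have "(norm (x - w))\<^sup>2 = (norm (x - y))\<^sup>2 - 2 * inner (x - y) (w - y) + (norm (w - y))\<^sup>2"
      using dot_norm_neg[of "x - y" "w - y"] by simp
    with obtuse[OF w] have "(norm (x - y))\<^sup>2 \<le> (norm (x - w))\<^sup>2"
      by (smt (verit) zero_le_power2)
    then show ?thesis by (simp add: dist_norm power_mono_iff)
  qed
  then show ?thesis
    using closest_point_unique[OF assms(1-3)] by metis
qed

lemma inner_vec_nonpos:
  fixes u v :: "real^'n::finite"
  shows "(\<And>k. u $ k * v $ k \<le> 0) \<Longrightarrow> inner u v \<le> 0"
  by (simp add: inner_vec_def sum_nonpos)

definition drop_coord :: "'n::finite \<Rightarrow> real^'n \<Rightarrow> real^'n" where
  "drop_coord j x = (\<chi> i. if i = j then 0 else x $ i)"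

lemma linear_drop_coord: "linear (drop_coord j)"
  by (rule linearI) (auto simp: drop_coord_def vec_eq_iff)

lemma soc_eq_norm_drop_coord: "soc (j::'n::finite) = {x. norm (drop_coord j x) \<le> x $ j}"
proof -
  have "sqrt (\<Sum>i\<in>UNIV - {j}. (x $ i)\<^sup>2) = norm (drop_coord j x)" for x :: "real^'n"
  proof -
    have "(\<Sum>i\<in>UNIV. (if i = j then 0 else x $ i)\<^sup>2) = (\<Sum>i\<in>UNIV - {j}. (x $ i)\<^sup>2)"
      by (rule sum.mono_neutral_cong_right) auto
    then show ?thesis by (simp add: norm_vec_def L2_set_def drop_coord_def)
  qed
  then show ?thesis by (simp add: soc_def)
qed

lemma soc_apex_nonneg: "x \<in> soc j \<Longrightarrow> 0 \<le> x $ j"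
  unfolding soc_eq_norm_drop_coord using norm_ge_zero order_trans by blast

lemma zero_in_soc: "0 \<in> soc j"
  by (simp add: soc_def)

lemma convex_soc: "convex (soc (j::'n::finite))"
  unfolding soc_eq_norm_drop_coord convex_def
proof safe
  fix x y :: "real^'n" and u v :: real
  assume x: "norm (drop_coord j x) \<le> x $ j" and y: "norm (drop_coord j y) \<le> y $ j"
    and uv: "0 \<le> u" "0 \<le> v" "u + v = 1"
  have "drop_coord j (u *\<^sub>R x + v *\<^sub>R y) = u *\<^sub>R drop_coord j x + v *\<^sub>R drop_coord j y"
    using linear_drop_coord[of j] by (simp add: linear_add linear_scale)
  then have "norm (drop_coord j (u *\<^sub>R x + v *\<^sub>R y)) \<le> u * norm (drop_coord j x) + v * norm (drop_coord j y)"
    using uv by (metis abs_of_nonneg norm_scaleR norm_triangle_ineq)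
  also have "\<dots> \<le> u * x $ j + v * y $ j"
    using x y uv by (simp add: add_mono mult_left_mono)
  finally show "norm (drop_coord j (u *\<^sub>R x + v *\<^sub>R y)) \<le> (u *\<^sub>R x + v *\<^sub>R y) $ j"
    by simp
qed

lemma closed_soc: "closed (soc j)"
proof -
  have "continuous_on UNIV (drop_coord j)"
    using linear_drop_coord[of j] by (simp add: linear_continuous_on linear_linear)
  then show ?thesis
    unfolding soc_eq_norm_drop_coord by (intro closed_Collect_le) (auto intro: continuous_intros)
qed

definition reflect_coord :: "'n::finite \<Rightarrow> real^'n \<Rightarrow> real^'n" where
  "reflect_coord i x = (\<chi> k. if k = i then - x $ k else x $ k)"

lemma soc_reflect_coord:
  assumes "i \<noteq> j" "x \<in> soc j"
  shows "reflect_coord i x \<in> soc j"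
proof -
  have "(\<Sum>k\<in>UNIV - {j}. (reflect_coord i x $ k)\<^sup>2) = (\<Sum>k\<in>UNIV - {j}. (x $ k)\<^sup>2)"
    by (rule sum.cong) (auto simp: reflect_coord_def)
  with assms show ?thesis by (simp add: soc_def reflect_coord_def)
qed

lemma dist_reflect_coord:
  fixes y z :: "real^'n::finite"
  shows "(dist y (reflect_coord i z))\<^sup>2 = (dist y z)\<^sup>2 + 4 * (y $ i * z $ i)"
proof -
  have dist_split: "(dist y w)\<^sup>2 = (y $ i - w $ i)\<^sup>2 + (\<Sum>k\<in>UNIV - {i}. (y $ k - w $ k)\<^sup>2)"
    for w :: "real^'n"
    by (simp add: dist_norm norm_vec_def L2_set_def sum_nonneg sum.remove)
  have "(\<Sum>k\<in>UNIV - {i}. (y $ k - reflect_coord i z $ k)\<^sup>2) = (\<Sum>k\<in>UNIV - {i}. (y $ k - z $ k)\<^sup>2)"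
    by (rule sum.cong) (auto simp: reflect_coord_def)
  moreover have "(y $ i - reflect_coord i z $ i)\<^sup>2 = (y $ i - z $ i)\<^sup>2 + 4 * (y $ i * z $ i)"
    by (simp add: reflect_coord_def power2_eq_square algebra_simps)
  ultimately show ?thesis
    unfolding dist_split[of "reflect_coord i z"] dist_split[of z] by simp
qed

lemma closest_point_coord_eq_0:
  fixes S :: "(real^'n::finite) set"
  assumes "convex S" "closed S" "S \<noteq> {}" and reflect: "\<And>x. x \<in> S \<Longrightarrow> reflect_coord i x \<in> S"
    and opposite: "y $ i * closest_point S y $ i \<le> 0"
  shows "closest_point S y $ i = 0"
proof -
  define z where "z = closest_point S y"
  have "z \<in> S" unfolding z_def using closest_point_in_set[OF assms(2,3)] .
  have "(dist y (reflect_coord i z))\<^sup>2 \<le> (dist y z)\<^sup>2"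
    using dist_reflect_coord[of y i z] opposite by (simp add: z_def)
  then have "dist y (reflect_coord i z) \<le> dist y z"
    using power2_le_imp_le zero_le_dist by blast
  then have "\<forall>w\<in>S. dist y (reflect_coord i z) \<le> dist y w"
    unfolding z_def using closest_point_le[OF assms(2)] order_trans by blast
  then have "reflect_coord i z = z"
    using closest_point_unique[OF assms(1,2) reflect[OF \<open>z \<in> S\<close>], of y] unfolding z_def by simp
  then have "reflect_coord i z $ i = z $ i"
    by simp
  then show ?thesis
    unfolding z_def[symmetric] by (simp add: reflect_coord_def)
qed

corollary closest_point_soc_coord_eq_0:
  "i \<noteq> j \<Longrightarrow> y $ i * closest_point (soc j) y $ i \<le> 0 \<Longrightarrow> closest_point (soc j) y $ i = 0"
  using closest_point_coord_eq_0[OF convex_soc closed_soc _ soc_reflect_coord] zero_in_soc by blast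

lemma closest_point_soc_nonneg:
  assumes "y \<in> nonneg_except j"
  shows "closest_point (soc j) y \<in> soc j \<inter> nonneg_orthant"
proof -
  have z: "closest_point (soc j) y \<in> soc j"
    using closest_point_in_set[OF closed_soc] zero_in_soc by blast
  have "0 \<le> closest_point (soc j) y $ i" for i
  proof (cases "i = j")
    case True then show ?thesis using soc_apex_nonneg[OF z] by simp
  next
    case False
    with assms have "0 \<le> y $ i" by (simp add: nonneg_except_def)
    then show ?thesis
      using closest_point_soc_coord_eq_0[OF False] by (smt (verit) mult_nonneg_nonpos)
  qed
  with z show ?thesis by (simp add: nonneg_orthant_def)
qed

definition clip_except :: "'n::finite \<Rightarrow> real^'n \<Rightarrow> real^'n" where
  "clip_except j x = (\<chi> k. if k = j then x $ k else max (x $ k) 0)"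

lemma clip_except_in_nonneg_except: "clip_except j x \<in> nonneg_except j"
  by (simp add: clip_except_def nonneg_except_def)

lemma convex_nonneg_except: "convex (nonneg_except j)"
  unfolding convex_def nonneg_except_def by auto

lemma closed_nonneg_except: "closed (nonneg_except j)"
  unfolding nonneg_except_def
  by (intro closed_Collect_all closed_Collect_imp closed_Collect_le) (auto intro: continuous_intros)

lemma convex_nonneg_orthant: "convex nonneg_orthant"
  unfolding convex_def nonneg_orthant_def by auto

lemma closed_nonneg_orthant: "closed nonneg_orthant"
  unfolding nonneg_orthant_def
  by (intro closed_Collect_all closed_Collect_le) (auto intro: continuous_intros)

lemma closest_point_nonneg_except: "closest_point (nonneg_except j) x = clip_except j x"
proof (rule closest_point_eqI[OF convex_nonneg_except closed_nonneg_except clip_except_in_nonneg_except])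
  fix w assume "w \<in> nonneg_except j"
  then show "inner (x - clip_except j x) (w - clip_except j x) \<le> 0"
    by (intro inner_vec_nonpos)
      (auto simp: clip_except_def nonneg_except_def mult_nonpos_nonneg max_def)
qed

theorem lemma6:
  fixes x :: "real^'n::finite" and j :: 'n
  shows "proj (soc j \<inter> nonneg_orthant) x = proj (soc j) (proj (nonneg_except j) x)"
proof -
  define y where "y = clip_except j x"
  define z where "z = closest_point (soc j) y"
  have z: "z \<in> soc j \<inter> nonneg_orthant"
    unfolding z_def y_def by (rule closest_point_soc_nonneg[OF clip_except_in_nonneg_except])
  have clipped_face: "z $ k = 0" if "k \<noteq> j" "x $ k < 0" for k
    using closest_point_soc_coord_eq_0[OF that(1), of y] that by (simp add: z_def y_def clip_except_def)
  have "closest_point (soc j \<inter> nonneg_orthant) x = z"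
  proof (rule closest_point_eqI[OF convex_Int[OF convex_soc convex_nonneg_orthant]
        closed_Int[OF closed_soc closed_nonneg_orthant] z])
    fix w assume w: "w \<in> soc j \<inter> nonneg_orthant"
    have "inner (y - z) (w - z) \<le> 0"
      unfolding z_def using closest_point_dot[OF convex_soc closed_soc] w by blast
    moreover have "inner (x - y) (w - z) \<le> 0"
    proof (rule inner_vec_nonpos)
      fix k
      show "(x - y) $ k * (w - z) $ k \<le> 0"
      proof (cases "k \<noteq> j \<and> x $ k < 0")
        case True
        with w clipped_face[of k] show ?thesis
          by (simp add: y_def clip_except_def nonneg_orthant_def mult_nonpos_nonneg)
      next
        case False
        then show ?thesis by (auto simp: y_def clip_except_def)
      qed
    qed
    ultimately show "inner (x - z) (w - z) \<le> 0"
      by (simp add: inner_diff_left)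
  qed
  then show ?thesis
    by (simp add: closest_point_nonneg_except z_def y_def)
qed

end
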